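(* There is an absolute constant $\kappa>0$ such that the following holds. Let $X,Y,Z$ be finite sets with $|Z|\ge 2$ and $f:X\times Y\to Z$ with $\mathrm{mdisc}(f)\le 2^{-d}$. Let $l,r\ge 1$ and let $O=\{(i_1,j_1),\dots,(i_k,j_k)\}$ be a set of $k$ distinct pairs with $i_t\in\{1,\dots,l\}$, $j_t\in\{1,\dots,r\}$, where $k\le d/5$. Define $f_O:X^l\times Y^r\to Z^k$ by $f_O(x_1,\dots,x_l,y_1,\dots,y_r)=(f(x_{i_1},y_{j_1}),\dots,f(x_{i_k},y_{j_k}))$. Then $\mathrm{mdisc}(f_O)\le \kappa\, 2^{-d/4}$, where the multicolor discrepancy of $f_O$ is taken with color set $Z^k$ and the uniform distribution on $X^l\times Y^r$.
   Context: Rectangles are product sets $A\times B$ in the relevant product domain; $\mu$ is the uniform distribution on that domain. For $M:U\times V\to W$ with $W$ finite, $\mathrm{mdisc}(M)=\max_R\max_{w\in W}|\mu(R\cap M^{-1}(w))-\mu(R)/|W||$, maximum over all rectangles $R\subseteq U\times V$. *)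

theory Defs
  imports Complex_Main
begin

definition unif_mu :: "'u set \<Rightarrow> 'v set \<Rightarrow> ('u \<times> 'v) set \<Rightarrow> real" where
  "unif_mu U V S = real (card (S \<inter> (U \<times> V))) / (real (card U) * real (card V))"

definition mdisc :: "'u set \<Rightarrow> 'v set \<Rightarrow> 'w set \<Rightarrow> ('u \<Rightarrow> 'v \<Rightarrow> 'w) \<Rightarrow> real" where
  "mdisc U V W M = Max { \<bar>unif_mu U V ((A \<times> B) \<inter> {(u, v). M u v = w})
                          - unif_mu U V (A \<times> B) / real (card W)\<bar>
                        | A B w. A \<subseteq> U \<and> B \<subseteq> V \<and> w \<in> W }"

definition tuples :: "'a set \<Rightarrow> nat \<Rightarrow> 'a list set" where
  "tuples S n = {xs. length xs = n \<and> set xs \<subseteq> S}"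

text \<open>f_O(x_1..x_l, y_1..y_r) = (f(x_{i_1},y_{j_1}), ..., f(x_{i_k},y_{j_k})), indices 0-based.\<close>
definition fO :: "('a \<Rightarrow> 'b \<Rightarrow> 'c) \<Rightarrow> (nat \<times> nat) list \<Rightarrow> 'a list \<Rightarrow> 'b list \<Rightarrow> 'c list" where
  "fO f Ob xs ys = map (\<lambda>(i, j). f (xs ! i) (ys ! j)) Ob"

end

theory Submission
  imports Defs
begin

(*
  Hybrid argument: fix a rectangle A x B and a colour z in Z^k and reveal the k coordinates of f_O
  one at a time. Let T t count the inputs in A x B whose first t colours agree with z, weighted by
  |Z|^-(k-t); then T 0 is the expected and T k the actual number of z-coloured inputs. In the step
  from T t to T (t+1) fix every coordinate except x_(i_t) and y_(j_t): since (i_t, j_t) differs from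
  all earlier pairs, each earlier constraint involves at most one of the two free coordinates, so the
  surviving pairs form a rectangle in X x Y and the step costs at most |X^l| |Y^r| mdisc(f). Hence
  mdisc(f_O) <= k mdisc(f) <= k 2^-d <= 2^(-d/4), the last step because k < 2^k and k <= d/5.
*)

lemma finite_tuples: "finite S \<Longrightarrow> finite (tuples S n)"
  unfolding tuples_def using finite_lists_length_eq[of S n] by (simp add: conj_commute)

lemma card_tuples: "finite S \<Longrightarrow> card (tuples S n) = card S ^ n"
  unfolding tuples_def using card_lists_length_eq[of S n] by (simp add: conj_commute)

lemma tuples_nonempty: "S \<noteq> {} \<Longrightarrow> tuples S n \<noteq> {}"
proof -
  assume "S \<noteq> {}"
  then obtain s where "s \<in> S" by blast
  then have "replicate n s \<in> tuples S n" by (auto simp: tuples_def)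
  then show ?thesis by blast
qed

lemma bij_betw_tuples_split:
  assumes "i < l"
  shows "bij_betw (\<lambda>((us, vs), a). us @ a # vs)
           ((tuples X i \<times> tuples X (l - Suc i)) \<times> X) (tuples X l)"
proof (rule bij_betw_imageI)
  show "inj_on (\<lambda>((us, vs), a). us @ a # vs) ((tuples X i \<times> tuples X (l - Suc i)) \<times> X)"
    by (auto simp: inj_on_def tuples_def)
  show "(\<lambda>((us, vs), a). us @ a # vs) ` ((tuples X i \<times> tuples X (l - Suc i)) \<times> X) = tuples X l"
  proof (intro equalityI subsetI)
    fix xs assume xs: "xs \<in> tuples X l"
    then have "xs = take i xs @ xs ! i # drop (Suc i) xs"
      using assms by (simp add: tuples_def id_take_nth_drop)
    moreover have "((take i xs, drop (Suc i) xs), xs ! i) \<in> (tuples X i \<times> tuples X (l - Suc i)) \<times> X"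
      using xs assms by (auto simp: tuples_def dest: in_set_takeD in_set_dropD)
    ultimately show "xs \<in> (\<lambda>((us, vs), a). us @ a # vs) ` ((tuples X i \<times> tuples X (l - Suc i)) \<times> X)"
      by force
  qed (use assms in \<open>auto simp: tuples_def\<close>)
qed

lemma sum_tuples_split:
  assumes "i < l"
  shows "(\<Sum>xs\<in>tuples X l. F xs) =
         (\<Sum>u\<in>tuples X i \<times> tuples X (l - Suc i). \<Sum>a\<in>X. F (fst u @ a # snd u))"
  by (simp add: sum.reindex_bij_betw[OF bij_betw_tuples_split[OF assms], symmetric]
      sum.cartesian_product case_prod_beta)

lemma card_tuples_split:
  assumes "finite X" "i < l"
  shows "card (tuples X i \<times> tuples X (l - Suc i)) * card X = card (tuples X l)"
proof -
  have "l = i + (l - Suc i) + 1" using assms(2) by simp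
  then show ?thesis
    by (metis assms(1) card_cartesian_product card_tuples power_add power_one_right)
qed

lemma mdisc_eq_Max_image:
  "mdisc U V W M = Max ((\<lambda>(A, B, w). \<bar>unif_mu U V ((A \<times> B) \<inter> {(u, v). M u v = w})
                          - unif_mu U V (A \<times> B) / real (card W)\<bar>) ` (Pow U \<times> Pow V \<times> W))"
  unfolding mdisc_def by (rule arg_cong[where f = Max]) (auto simp: image_iff; blast)

lemma mdisc_ge:
  assumes "finite U" "finite V" "finite W" "A \<subseteq> U" "B \<subseteq> V" "w \<in> W"
  shows "\<bar>unif_mu U V ((A \<times> B) \<inter> {(u, v). M u v = w}) - unif_mu U V (A \<times> B) / real (card W)\<bar>
           \<le> mdisc U V W M"
  unfolding mdisc_eq_Max_image
proof (rule Max_ge)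
  show "finite ((\<lambda>(A, B, w). \<bar>unif_mu U V ((A \<times> B) \<inter> {(u, v). M u v = w})
                          - unif_mu U V (A \<times> B) / real (card W)\<bar>) ` (Pow U \<times> Pow V \<times> W))"
    using assms by simp
  show "\<bar>unif_mu U V ((A \<times> B) \<inter> {(u, v). M u v = w}) - unif_mu U V (A \<times> B) / real (card W)\<bar>
      \<in> (\<lambda>(A, B, w). \<bar>unif_mu U V ((A \<times> B) \<inter> {(u, v). M u v = w})
                          - unif_mu U V (A \<times> B) / real (card W)\<bar>) ` (Pow U \<times> Pow V \<times> W)"
    by (rule image_eqI[where x = "(A, B, w)"]) (use assms in auto)
qed

lemma mdisc_le_iff:
  assumes "finite U" "finite V" "finite W" "W \<noteq> {}"
  shows "mdisc U V W M \<le> m \<longleftrightarrow>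
    (\<forall>A\<subseteq>U. \<forall>B\<subseteq>V. \<forall>w\<in>W.
       \<bar>unif_mu U V ((A \<times> B) \<inter> {(u, v). M u v = w}) - unif_mu U V (A \<times> B) / real (card W)\<bar> \<le> m)"
  unfolding mdisc_eq_Max_image using assms by (subst Max_le_iff) auto

definition colour_excess :: "('u \<Rightarrow> 'v \<Rightarrow> 'w) \<Rightarrow> 'w set \<Rightarrow> 'w \<Rightarrow> ('u \<times> 'v) set \<Rightarrow> real" where
  "colour_excess M W w S = (\<Sum>(u, v)\<in>S. (if M u v = w then 1 else 0) - 1 / real (card W))"

lemma colour_excess_eq_card:
  assumes "finite S"
  shows "colour_excess M W w S =
           real (card {(u, v) \<in> S. M u v = w}) - real (card S) / real (card W)"
proof -
  have "(\<Sum>(u, v)\<in>S. if M u v = w then 1 else 0) = real (card {(u, v) \<in> S. M u v = w})"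
  proof -
    have "S \<inter> {p. M (fst p) (snd p) = w} = {(u, v) \<in> S. M u v = w}" by auto
    then show ?thesis using assms by (simp add: sum.If_cases case_prod_beta)
  qed
  then show ?thesis
    unfolding colour_excess_def by (simp add: sum_subtractf case_prod_beta)
qed

lemma colour_excess_eq_sum_indicator:
  assumes "finite U" "finite V" "S \<subseteq> U \<times> V"
  shows "colour_excess M W w S = (\<Sum>u\<in>U. \<Sum>v\<in>V.
           if (u, v) \<in> S then (if M u v = w then 1 else 0) - 1 / real (card W) else 0)"
proof -
  have "colour_excess M W w S = (\<Sum>p\<in>(U \<times> V) \<inter> S.
          (if M (fst p) (snd p) = w then 1 else 0) - 1 / real (card W))"
    unfolding colour_excess_def case_prod_beta using assms(3) by (simp add: Int_absorb1)
  also have "\<dots> = (\<Sum>p\<in>U \<times> V.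
          if p \<in> S then (if M (fst p) (snd p) = w then 1 else 0) - 1 / real (card W) else 0)"
    using assms(1,2) by (simp add: sum.inter_restrict)
  finally show ?thesis by (simp add: sum.cartesian_product case_prod_beta)
qed

lemma colour_excess_Times_eq_unif_mu:
  assumes "finite U" "finite V" "A \<subseteq> U" "B \<subseteq> V"
  shows "colour_excess M W w (A \<times> B) = real (card U) * real (card V) *
     (unif_mu U V ((A \<times> B) \<inter> {(u, v). M u v = w}) - unif_mu U V (A \<times> B) / real (card W))"
proof (cases "U = {} \<or> V = {}")
  case True
  then show ?thesis using assms by (auto simp: colour_excess_def)
next
  case False
  then have "card U > 0" "card V > 0" using assms(1,2) by (auto simp: card_gt_0_iff)
  moreover have "(A \<times> B) \<inter> {(u, v). M u v = w} \<inter> (U \<times> V) = {(u, v) \<in> A \<times> B. M u v = w}"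
    and "(A \<times> B) \<inter> (U \<times> V) = A \<times> B"
    using assms(3,4) by auto
  moreover have "finite (A \<times> B)" using assms by (meson finite_SigmaI finite_subset)
  ultimately show ?thesis
    by (simp add: colour_excess_eq_card unif_mu_def field_simps)
qed

lemma abs_colour_excess_Times_le_mdisc:
  assumes "finite U" "finite V" "finite W" "A \<subseteq> U" "B \<subseteq> V" "w \<in> W"
  shows "\<bar>colour_excess M W w (A \<times> B)\<bar> \<le> real (card U) * real (card V) * mdisc U V W M"
  unfolding colour_excess_Times_eq_unif_mu[OF assms(1,2,4,5)] abs_mult
  by (simp add: mdisc_ge[OF assms] mult_left_mono)

lemma mdisc_le_if_abs_colour_excess_le:
  assumes "finite U" "finite V" "finite W" "W \<noteq> {}" "0 \<le> m"
    and excess: "\<And>A B w. A \<subseteq> U \<Longrightarrow> B \<subseteq> V \<Longrightarrow> w \<in> W \<Longrightarrow>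
      \<bar>colour_excess M W w (A \<times> B)\<bar> \<le> real (card U) * real (card V) * m"
  shows "mdisc U V W M \<le> m"
  unfolding mdisc_le_iff[OF assms(1-4)]
proof (intro allI impI ballI)
  fix A B w assume AB: "A \<subseteq> U" "B \<subseteq> V" and w: "w \<in> W"
  show "\<bar>unif_mu U V ((A \<times> B) \<inter> {(u, v). M u v = w}) - unif_mu U V (A \<times> B) / real (card W)\<bar> \<le> m"
  proof (cases "card U = 0 \<or> card V = 0")
    case True
    \<comment> \<open>\<open>unif_mu\<close> divides by 0 here, so both measures are 0\<close>
    then show ?thesis using assms(5) by (auto simp: unif_mu_def)
  next
    case False
    then have "real (card U) * real (card V) > 0" by simp
    then show ?thesis
      using excess[OF AB w]
      unfolding colour_excess_Times_eq_unif_mu[OF assms(1,2) AB] abs_mult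
      by (simp add: mult_le_cancel_left_pos)
  qed
qed

lemma rectangular_eq_Times:
  assumes "\<And>a b a' b'. (a, b) \<in> S \<Longrightarrow> (a', b') \<in> S \<Longrightarrow> (a, b') \<in> S"
  shows "S = fst ` S \<times> snd ` S"
proof (intro equalityI subsetI)
  fix p assume "p \<in> fst ` S \<times> snd ` S"
  then obtain b a' where "(fst p, b) \<in> S" "(a', snd p) \<in> S" by force
  then show "p \<in> S" using assms[of "fst p" b a' "snd p"] by simp
qed force

lemma abs_colour_excess_rectangular_le_mdisc:
  assumes "finite X" "finite Y" "finite W" "w \<in> W" "S \<subseteq> X \<times> Y"
    and "\<And>a b a' b'. (a, b) \<in> S \<Longrightarrow> (a', b') \<in> S \<Longrightarrow> (a, b') \<in> S"
  shows "\<bar>colour_excess f W w S\<bar> \<le> real (card X) * real (card Y) * mdisc X Y W f"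
proof -
  have "S = fst ` S \<times> snd ` S" by (rule rectangular_eq_Times) (rule assms(6))
  moreover have "fst ` S \<subseteq> X" "snd ` S \<subseteq> Y" using assms(5) by auto
  ultimately show ?thesis
    using abs_colour_excess_Times_le_mdisc[OF assms(1-3) _ _ assms(4)] by metis
qed

lemma colour_excess_coordinate_eq_sum_fibres:
  assumes finX: "finite X" and finY: "finite Y" and i: "i < l" and j: "j < r"
    and H: "H \<subseteq> tuples X l \<times> tuples Y r"
  shows "colour_excess (\<lambda>xs ys. f (xs ! i) (ys ! j)) W w H =
    (\<Sum>u\<in>tuples X i \<times> tuples X (l - Suc i). \<Sum>v\<in>tuples Y j \<times> tuples Y (r - Suc j).
       colour_excess f W w {(a, b) \<in> X \<times> Y. (fst u @ a # snd u, fst v @ b # snd v) \<in> H})"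
proof -
  define E where "E a b = (if f a b = w then 1 else 0) - 1 / real (card W)" for a b
  define G where "G xs ys = (if (xs, ys) \<in> H then E (xs ! i) (ys ! j) else 0)" for xs ys
  have fibre: "(\<Sum>a\<in>X. \<Sum>b\<in>Y. G (fst u @ a # snd u) (fst v @ b # snd v))
      = colour_excess f W w {(a, b) \<in> X \<times> Y. (fst u @ a # snd u, fst v @ b # snd v) \<in> H}"
    if "u \<in> tuples X i \<times> tuples X (l - Suc i)" "v \<in> tuples Y j \<times> tuples Y (r - Suc j)" for u v
  proof -
    have "length (fst u) = i" "length (fst v) = j" using that by (auto simp: tuples_def)
    then show ?thesis
      by (subst colour_excess_eq_sum_indicator[OF finX finY]) (auto simp: G_def E_def intro!: sum.cong)
  qed
  have "colour_excess (\<lambda>xs ys. f (xs ! i) (ys ! j)) W w H = (\<Sum>xs\<in>tuples X l. \<Sum>ys\<in>tuples Y r. G xs ys)"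
    unfolding G_def E_def
    by (rule colour_excess_eq_sum_indicator[OF finite_tuples[OF finX] finite_tuples[OF finY] H])
  also have "\<dots> = (\<Sum>u\<in>tuples X i \<times> tuples X (l - Suc i). \<Sum>a\<in>X.
      \<Sum>v\<in>tuples Y j \<times> tuples Y (r - Suc j). \<Sum>b\<in>Y. G (fst u @ a # snd u) (fst v @ b # snd v))"
    by (simp add: sum_tuples_split[OF i] sum_tuples_split[OF j])
  also have "\<dots> = (\<Sum>u\<in>tuples X i \<times> tuples X (l - Suc i). \<Sum>v\<in>tuples Y j \<times> tuples Y (r - Suc j).
      \<Sum>a\<in>X. \<Sum>b\<in>Y. G (fst u @ a # snd u) (fst v @ b # snd v))"
    by (rule sum.cong[OF refl], rule sum.swap)
  finally show ?thesis by (simp add: fibre)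
qed

lemma abs_colour_excess_coordinate_le_mdisc:
  assumes finX: "finite X" and finY: "finite Y" and finW: "finite W" and w: "w \<in> W"
    and i: "i < l" and j: "j < r" and H: "H \<subseteq> tuples X l \<times> tuples Y r"
    and rect: "\<And>xs ys a a' b b'. (xs[i := a], ys[j := b]) \<in> H \<Longrightarrow> (xs[i := a'], ys[j := b']) \<in> H
      \<Longrightarrow> (xs[i := a], ys[j := b']) \<in> H"
  shows "\<bar>colour_excess (\<lambda>xs ys. f (xs ! i) (ys ! j)) W w H\<bar>
           \<le> real (card (tuples X l)) * real (card (tuples Y r)) * mdisc X Y W f"
proof -
  define U where "U = tuples X i \<times> tuples X (l - Suc i)"
  define V where "V = tuples Y j \<times> tuples Y (r - Suc j)"
  define fibre where
    "fibre u v = {(a, b) \<in> X \<times> Y. (fst u @ a # snd u, fst v @ b # snd v) \<in> H}" for u v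
  have fibre_bound: "\<bar>colour_excess f W w (fibre u v)\<bar> \<le> real (card X) * real (card Y) * mdisc X Y W f"
    if "u \<in> U" "v \<in> V" for u v
  proof (rule abs_colour_excess_rectangular_le_mdisc[OF finX finY finW w])
    show "fibre u v \<subseteq> X \<times> Y" by (auto simp: fibre_def)
  next
    have "length (fst u) = i" "length (fst v) = j" using that by (auto simp: U_def V_def tuples_def)
    moreover fix a b a' b' assume "(a, b) \<in> fibre u v" "(a', b') \<in> fibre u v"
    ultimately show "(a, b') \<in> fibre u v"
      using rect[of "fst u @ a # snd u" a "fst v @ b # snd v" b a' b']
      by (auto simp: fibre_def list_update_append)
  qed
  have "\<bar>colour_excess (\<lambda>xs ys. f (xs ! i) (ys ! j)) W w H\<bar>
      = \<bar>\<Sum>u\<in>U. \<Sum>v\<in>V. colour_excess f W w (fibre u v)\<bar>"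
    unfolding U_def V_def fibre_def colour_excess_coordinate_eq_sum_fibres[OF finX finY i j H] ..
  also have "\<dots> \<le> (\<Sum>u\<in>U. \<Sum>v\<in>V. \<bar>colour_excess f W w (fibre u v)\<bar>)"
    by (rule order_trans[OF sum_abs sum_mono[OF sum_abs]])
  also have "\<dots> \<le> (\<Sum>u\<in>U. \<Sum>v\<in>V. real (card X) * real (card Y) * mdisc X Y W f)"
    by (intro sum_mono fibre_bound)
  also have "\<dots> = real (card U * card X) * real (card V * card Y) * mdisc X Y W f"
    by (simp add: algebra_simps)
  also have "\<dots> = real (card (tuples X l)) * real (card (tuples Y r)) * mdisc X Y W f"
    by (simp only: U_def V_def card_tuples_split[OF finX i] card_tuples_split[OF finY j])
  finally show ?thesis .
qed

lemma fO_update_rectangular: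
  assumes "(i, j) \<notin> set Ob"
    and "fO f Ob (xs[i := a]) (ys[j := b]) = zs" "fO f Ob (xs[i := a']) (ys[j := b']) = zs"
  shows "fO f Ob (xs[i := a]) (ys[j := b']) = zs"
proof -
  have "fO f Ob (xs[i := a]) (ys[j := b]) = fO f Ob (xs[i := a']) (ys[j := b'])"
    using assms(2,3) by simp
  then have agree: "f (xs[i := a] ! p) (ys[j := b] ! q) = f (xs[i := a'] ! p) (ys[j := b'] ! q)"
    if "(p, q) \<in> set Ob" for p q
    using that unfolding fO_def by fastforce
  have "f (xs[i := a] ! p) (ys[j := b'] ! q) = f (xs[i := a] ! p) (ys[j := b] ! q)"
    if "(p, q) \<in> set Ob" for p q
  proof (cases "p = i")
    case True
    then have "q \<noteq> j" using assms(1) that by blast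
    then show ?thesis by simp
  next
    case False
    then show ?thesis using agree[OF that] by simp
  qed
  then have "fO f Ob (xs[i := a]) (ys[j := b']) = fO f Ob (xs[i := a]) (ys[j := b])"
    unfolding fO_def by (auto intro!: map_cong)
  with assms(2) show ?thesis by simp
qed

lemma nth_notin_set_take: "distinct xs \<Longrightarrow> t < length xs \<Longrightarrow> xs ! t \<notin> set (take t xs)"
  using distinct_take[of xs "Suc t"] by (simp add: take_Suc_conv_app_nth)

lemma abs_colour_excess_fO_le:
  fixes f :: "'a \<Rightarrow> 'b \<Rightarrow> 'c"
  assumes finX: "finite X" and finY: "finite Y" and finZ: "finite Z"
    and dist: "distinct Ob" and range: "\<forall>(i, j)\<in>set Ob. i < l \<and> j < r"
    and A: "A \<subseteq> tuples X l" and B: "B \<subseteq> tuples Y r" and z: "z \<in> tuples Z (length Ob)"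
  shows "\<bar>colour_excess (fO f Ob) (tuples Z (length Ob)) z (A \<times> B)\<bar>
           \<le> real (length Ob) * (real (card (tuples X l)) * real (card (tuples Y r)) * mdisc X Y Z f)"
proof -
  define k where "k = length Ob"
  define m where "m = real (card (tuples X l)) * real (card (tuples Y r)) * mdisc X Y Z f"
  define H where "H t = {(xs, ys) \<in> A \<times> B. fO f (take t Ob) xs ys = take t z}" for t
  define T where "T t = real (card (H t)) / real (card Z) ^ (k - t)" for t
  have lz: "length z = k" and zZ: "set z \<subseteq> Z" using z by (auto simp: tuples_def k_def)
  have finAB: "finite (A \<times> B)"
    using A B finX finY by (meson finite_SigmaI finite_subset finite_tuples)
  have finH: "finite (H t)" for t
    using finAB by (auto simp: H_def intro: finite_subset)
  have step: "\<bar>T (Suc t) - T t\<bar> \<le> m" if t: "t < k" for t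
  proof -
    obtain i j where ij: "Ob ! t = (i, j)" by fastforce
    have "i < l" "j < r" using range nth_mem[of t Ob] t ij by (auto simp: k_def)
    have zt: "z ! t \<in> Z" using zZ lz t by auto
    then have card_Z_ge_1: "real (card Z) \<ge> 1" using finZ by (auto simp: Suc_le_eq card_gt_0_iff)
    have H_Suc: "H (Suc t) = {(xs, ys) \<in> H t. f (xs ! i) (ys ! j) = z ! t}"
      using t lz ij by (auto simp: H_def fO_def take_Suc_conv_app_nth k_def)
    have "k - t = Suc (k - Suc t)" using t by simp
    then have "T (Suc t) - T t = colour_excess (\<lambda>xs ys. f (xs ! i) (ys ! j)) Z (z ! t) (H t)
        / real (card Z) ^ (k - Suc t)"
      using card_Z_ge_1 by (simp add: T_def H_Suc colour_excess_eq_card finH field_simps)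
    then have "\<bar>T (Suc t) - T t\<bar> \<le> \<bar>colour_excess (\<lambda>xs ys. f (xs ! i) (ys ! j)) Z (z ! t) (H t)\<bar>"
      using card_Z_ge_1 by (simp add: abs_divide divide_le_eq mult_le_cancel_left1)
    also have "\<dots> \<le> m"
      unfolding m_def
    proof (rule abs_colour_excess_coordinate_le_mdisc[OF finX finY finZ zt \<open>i < l\<close> \<open>j < r\<close>])
      show "H t \<subseteq> tuples X l \<times> tuples Y r" using A B by (auto simp: H_def)
      have notin: "(i, j) \<notin> set (take t Ob)"
        using nth_notin_set_take[OF dist, of t] t ij by (simp add: k_def)
      fix xs ys a a' b b'
      assume "(xs[i := a], ys[j := b]) \<in> H t" "(xs[i := a'], ys[j := b']) \<in> H t"
      then show "(xs[i := a], ys[j := b']) \<in> H t"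
        using fO_update_rectangular[OF notin, of f xs a ys b "take t z" a' b'] by (simp add: H_def)
    qed
    finally show ?thesis .
  qed
  have "H k = {(xs, ys) \<in> A \<times> B. fO f Ob xs ys = z}" and "H 0 = A \<times> B"
    using lz by (simp_all add: H_def k_def fO_def)
  then have "colour_excess (fO f Ob) (tuples Z k) z (A \<times> B) = T k - T 0"
    by (simp add: T_def colour_excess_eq_card finAB card_tuples finZ)
  also have "\<dots> = (\<Sum>t<k. T (Suc t) - T t)"
    by (rule sum_lessThan_telescope[symmetric])
  finally have "\<bar>colour_excess (fO f Ob) (tuples Z k) z (A \<times> B)\<bar> \<le> (\<Sum>t<k. \<bar>T (Suc t) - T t\<bar>)"
    by (simp add: sum_abs)
  also have "\<dots> \<le> real k * m"
    using sum_mono[of "{..<k}" "\<lambda>t. \<bar>T (Suc t) - T t\<bar>" "\<lambda>_. m"] step by simp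
  finally show ?thesis by (simp add: k_def m_def)
qed

lemma mdisc_nonneg:
  assumes "finite U" "finite V" "finite W" "W \<noteq> {}"
  shows "0 \<le> mdisc U V W M"
proof -
  obtain w where "w \<in> W" using assms(4) by blast
  then show ?thesis using mdisc_ge[OF assms(1-3), of "{}" "{}" w M] by simp
qed

lemma mdisc_fO_le:
  assumes "finite X" "finite Y" "finite Z" "Z \<noteq> {}"
    and "distinct Ob" "\<forall>(i, j)\<in>set Ob. i < l \<and> j < r"
  shows "mdisc (tuples X l) (tuples Y r) (tuples Z (length Ob)) (fO f Ob)
           \<le> real (length Ob) * mdisc X Y Z f"
proof (rule mdisc_le_if_abs_colour_excess_le)
  show "0 \<le> real (length Ob) * mdisc X Y Z f"
    using mdisc_nonneg[OF assms(1-4)] by simp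
  fix A B z
  assume "A \<subseteq> tuples X l" "B \<subseteq> tuples Y r" "z \<in> tuples Z (length Ob)"
  then show "\<bar>colour_excess (fO f Ob) (tuples Z (length Ob)) z (A \<times> B)\<bar>
      \<le> real (card (tuples X l)) * real (card (tuples Y r)) * (real (length Ob) * mdisc X Y Z f)"
    using abs_colour_excess_fO_le[OF assms(1-3,5,6)] by (simp add: algebra_simps)
qed (use assms in \<open>simp_all add: finite_tuples tuples_nonempty\<close>)

lemma of_nat_mult_two_powr_neg_le:
  fixes k :: nat and d :: real
  assumes "real k \<le> d / 5"
  shows "real k * 2 powr (- d) \<le> 2 powr (- d / 4)"
proof -
  have "real k \<le> 2 powr real k"
    using of_nat_less_two_power[of k] by (simp add: powr_realpow)
  then have "real k * 2 powr (- d) \<le> 2 powr real k * 2 powr (- d)"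
    by (simp add: mult_right_mono)
  also have "\<dots> = 2 powr (real k - d)"
    by (simp add: powr_add[symmetric])
  also have "\<dots> \<le> 2 powr (- d / 4)"
    using assms by (intro powr_mono) auto
  finally show ?thesis .
qed

lemma mdisc_fO_le_two_powr:
  assumes "finite X" "finite Y" "finite Z" "Z \<noteq> {}" "mdisc X Y Z f \<le> 2 powr (- d)"
    and "distinct Ob" "\<forall>(i, j)\<in>set Ob. i < l \<and> j < r" "real (length Ob) \<le> d / 5"
  shows "mdisc (tuples X l) (tuples Y r) (tuples Z (length Ob)) (fO f Ob) \<le> 2 powr (- d / 4)"
proof -
  have "mdisc (tuples X l) (tuples Y r) (tuples Z (length Ob)) (fO f Ob)
      \<le> real (length Ob) * mdisc X Y Z f"
    using mdisc_fO_le assms(1-4,6,7) by blast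
  also have "\<dots> \<le> real (length Ob) * 2 powr (- d)"
    using assms(5) by (simp add: mult_left_mono)
  also have "\<dots> \<le> 2 powr (- d / 4)"
    using of_nat_mult_two_powr_neg_le assms(8) by blast
  finally show ?thesis .
qed

theorem mainTheorem5:
  shows "\<exists>\<kappa>::real. \<kappa> > 0 \<and>
    (\<forall>(X::nat set) (Y::nat set) (Z::nat set) (f::nat \<Rightarrow> nat \<Rightarrow> nat) (d::real)
        (l::nat) (r::nat) (Ob::(nat \<times> nat) list).
       finite X \<and> finite Y \<and> finite Z \<and> card Z \<ge> 2 \<and>
       (\<forall>x\<in>X. \<forall>y\<in>Y. f x y \<in> Z) \<and>
       mdisc X Y Z f \<le> 2 powr (- d) \<and>
       l \<ge> 1 \<and> r \<ge> 1 \<and>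
       distinct Ob \<and> (\<forall>(i, j)\<in>set Ob. i < l \<and> j < r) \<and>
       real (length Ob) \<le> d / 5
       \<longrightarrow> mdisc (tuples X l) (tuples Y r) (tuples Z (length Ob)) (fO f Ob)
             \<le> \<kappa> * 2 powr (- d / 4))"
proof (intro exI[of _ 1] conjI allI impI)
  fix X Y Z :: "nat set" and f :: "nat \<Rightarrow> nat \<Rightarrow> nat" and d :: real and l r :: nat
    and Ob :: "(nat \<times> nat) list"
  assume hyps: "finite X \<and> finite Y \<and> finite Z \<and> card Z \<ge> 2 \<and>
       (\<forall>x\<in>X. \<forall>y\<in>Y. f x y \<in> Z) \<and> mdisc X Y Z f \<le> 2 powr (- d) \<and> l \<ge> 1 \<and> r \<ge> 1 \<and>
       distinct Ob \<and> (\<forall>(i, j)\<in>set Ob. i < l \<and> j < r) \<and> real (length Ob) \<le> d / 5"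
  then have "Z \<noteq> {}" by auto
  with hyps show "mdisc (tuples X l) (tuples Y r) (tuples Z (length Ob)) (fO f Ob)
      \<le> 1 * 2 powr (- d / 4)"
    using mdisc_fO_le_two_powr[of X Y Z f d Ob l r] by simp
qed simp

end
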